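(* For every complex $z$, \[ \cosh(\pi z)=\sum_{n\ge0}\frac{\prod_{j=0}^{n-1}(j^2+9z^2)}{(2n)!}, \] and, equivalently via Euler's transformation, $\cosh(\pi z)$ equals the continued fraction with $a(0)=1$, $a(1)=2$, $a(n)=5n^2-4n+1+9z^2$ for $n\ge2$, $b(0)=9z^2$, $b(n)=-2n(2n-1)(n^2+9z^2)$ for $n\ge1$.
   Context: For sequences $a(n),b(n)$, the continued fraction is $a(0)+\cfrac{b(0)}{a(1)+\cfrac{b(1)}{a(2)+\cdots}}$; the empty product equals $1$. *)

theory Defs
  imports Complex_Main
begin

text \<open>Continued fraction a(0) + b(0)/(a(1) + b(1)/(a(2) + ...)).
  Its n-th convergent is P_n / Q_n, given by the fundamental recurrences
  P_{-1} = 1, P_0 = a 0, P_{n+1} = a(n+1) P_n + b(n) P_{n-1},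
  Q_{-1} = 0, Q_0 = 1,   Q_{n+1} = a(n+1) Q_n + b(n) Q_{n-1}.
  Here cf_num a b (Suc n) = P_n and cf_num a b 0 = P_{-1} (same for cf_den).\<close>

fun cf_num :: "(nat \<Rightarrow> 'a::field) \<Rightarrow> (nat \<Rightarrow> 'a) \<Rightarrow> nat \<Rightarrow> 'a" where
  "cf_num a b 0 = 1"
| "cf_num a b (Suc 0) = a 0"
| "cf_num a b (Suc (Suc n)) = a (Suc n) * cf_num a b (Suc n) + b n * cf_num a b n"

fun cf_den :: "(nat \<Rightarrow> 'a::field) \<Rightarrow> (nat \<Rightarrow> 'a) \<Rightarrow> nat \<Rightarrow> 'a" where
  "cf_den a b 0 = 0"
| "cf_den a b (Suc 0) = 1"
| "cf_den a b (Suc (Suc n)) = a (Suc n) * cf_den a b (Suc n) + b n * cf_den a b n"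

definition cf_convergent :: "(nat \<Rightarrow> 'a::field) \<Rightarrow> (nat \<Rightarrow> 'a) \<Rightarrow> nat \<Rightarrow> 'a" where
  "cf_convergent a b n = cf_num a b (Suc n) / cf_den a b (Suc n)"

definition cf_converges_to :: "(nat \<Rightarrow> 'a::{field,topological_space}) \<Rightarrow> (nat \<Rightarrow> 'a) \<Rightarrow> 'a \<Rightarrow> bool" where
  "cf_converges_to a b x \<longleftrightarrow> (cf_convergent a b \<longlonglongrightarrow> x)"

end

theory Submission
  imports Defs "HOL-Analysis.FPS_Convergence"
begin

text \<open>The coefficients c_n of the series satisfy (2n+2)(2n+1) c_(n+1) = (n^2 + w) c_n with
  w = 9z^2, so G(y) = \<Sum> c_n y^n solves y(4 - y) G'' + (2 - y) G' = w G. Substituting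
  y = 2 - 2 cos p turns this into h'' = w h for h(p) = G(2 - 2 cos p), with h(0) = 1 and
  h'(0) = 0; hence h(p) = cosh(3zp), and p = \<pi>/3 (where y = 1) gives the series.
  The continued fraction is Euler's transformation of this series, whose convergents are
  exactly its partial sums.\<close>

locale euler_cf =
  fixes a b p q :: "nat \<Rightarrow> 'a::{field,topological_space}"
  assumes a_0: "a 0 = 1" and a_1: "a (Suc 0) = q 0"
    and a_Suc_Suc: "\<And>n. a (Suc (Suc n)) = q (Suc n) + p (Suc n)"
    and b_0: "b 0 = p 0"
    and b_Suc: "\<And>n. b (Suc n) = - q n * p (Suc n)"
begin

lemma cf_den_Suc_Suc: "cf_den a b (Suc (Suc n)) = q n * cf_den a b (Suc n)"
  by (induction n) (simp_all add: a_1 a_Suc_Suc b_Suc algebra_simps)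

lemma cf_num_Suc_Suc: "cf_num a b (Suc (Suc n)) = q n * cf_num a b (Suc n) + (\<Prod>j\<le>n. p j)"
  by (induction n) (simp_all add: a_0 a_1 b_0 a_Suc_Suc b_Suc algebra_simps)

lemma cf_den_Suc: "cf_den a b (Suc n) = (\<Prod>j<n. q j)"
  by (induction n) (simp_all add: cf_den_Suc_Suc del: cf_den.simps(3))

lemma cf_convergent_eq_sum:
  assumes "\<And>j. q j \<noteq> 0"
  shows "cf_convergent a b n = (\<Sum>k\<le>n. \<Prod>j<k. p j / q j)"
proof (induction n)
  case 0
  show ?case by (simp add: cf_convergent_def a_0)
next
  case (Suc n)
  have "cf_convergent a b (Suc n) = cf_convergent a b n + (\<Prod>j\<le>n. p j) / (\<Prod>j<Suc n. q j)"
    using assms by (simp add: cf_convergent_def cf_num_Suc_Suc cf_den_Suc add_divide_distrib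
        del: cf_num.simps cf_den.simps)
  also have "(\<Prod>j\<le>n. p j) / (\<Prod>j<Suc n. q j) = (\<Prod>j<Suc n. p j / q j)"
    by (simp add: prod_dividef lessThan_Suc_atMost)
  finally show ?case using Suc.IH by simp
qed

lemma cf_converges_to_iff_sums:
  assumes "\<And>j. q j \<noteq> 0"
  shows "cf_converges_to a b x \<longleftrightarrow> (\<lambda>k. \<Prod>j<k. p j / q j) sums x"
  unfolding cf_converges_to_def sums_def cf_convergent_eq_sum[OF assms] lessThan_Suc_atMost[symmetric]
  by (rule filterlim_sequentially_Suc[of "\<lambda>n. \<Sum>k<n. \<Prod>j<k. p j / q j"])

end

lemma norm_less_fps_conv_radius_add:
  "norm z < fps_conv_radius f \<Longrightarrow> norm z < fps_conv_radius g \<Longrightarrow> norm z < fps_conv_radius (f + g)"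
  using fps_conv_radius_add[of f g] by (simp add: min_def split: if_splits)

lemma norm_less_fps_conv_radius_diff:
  "norm z < fps_conv_radius f \<Longrightarrow> norm z < fps_conv_radius g \<Longrightarrow> norm z < fps_conv_radius (f - g)"
  using fps_conv_radius_diff[of f g] by (simp add: min_def split: if_splits)

lemma norm_less_fps_conv_radius_mult:
  "norm z < fps_conv_radius f \<Longrightarrow> norm z < fps_conv_radius g \<Longrightarrow> norm z < fps_conv_radius (f * g)"
  using fps_conv_radius_mult[of f g] by (simp add: min_def split: if_splits)

lemma linear_ode_zero:
  fixes f :: "complex \<Rightarrow> complex"
  assumes "convex S" "0 \<in> S" "x \<in> S" "f 0 = 0"
    and f': "\<And>x. x \<in> S \<Longrightarrow> (f has_field_derivative c * f x) (at x within S)"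
  shows "f x = 0"
proof -
  have "\<exists>k. \<forall>x\<in>S. f x * exp (- (c * x)) = k"
  proof (rule has_field_derivative_zero_constant[OF \<open>convex S\<close>])
    fix x assume "x \<in> S"
    have "((\<lambda>x. f x * exp (- (c * x))) has_field_derivative
        c * f x * exp (- (c * x)) + f x * (- c * exp (- (c * x)))) (at x within S)"
      by (rule derivative_eq_intros f' \<open>x \<in> S\<close> refl | simp)+
    then show "((\<lambda>x. f x * exp (- (c * x))) has_field_derivative 0) (at x within S)"
      by (simp add: algebra_simps)
  qed
  then have "f x * exp (- (c * x)) = f 0 * exp (- (c * 0))"
    using \<open>0 \<in> S\<close> \<open>x \<in> S\<close> by metis
  then show ?thesis using \<open>f 0 = 0\<close> by simp
qed

lemma second_order_ode_cosh:
  fixes f g :: "complex \<Rightarrow> complex"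
  assumes "convex S" "0 \<in> S" "x \<in> S" "f 0 = 1" "g 0 = 0"
    and f': "\<And>x. x \<in> S \<Longrightarrow> (f has_field_derivative g x) (at x within S)"
    and g': "\<And>x. x \<in> S \<Longrightarrow> (g has_field_derivative s\<^sup>2 * f x) (at x within S)"
  shows "f x = cosh (s * x)"
proof -
  define d where "d x = f x - cosh (s * x)" for x
  define d' where "d' x = g x - s * sinh (s * x)" for x
  have dd: "(d has_field_derivative d' x) (at x within S)" if "x \<in> S" for x
    unfolding d_def[abs_def] d'_def
    by (rule derivative_eq_intros f' that refl | simp)+
  have dd': "(d' has_field_derivative s\<^sup>2 * d x) (at x within S)" if "x \<in> S" for x
    unfolding d_def d'_def[abs_def]
    by (rule derivative_eq_intros g' that refl | simp add: algebra_simps power2_eq_square)+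
  have "d' x - s * d x = 0" if "x \<in> S" for x
  proof (rule linear_ode_zero[OF \<open>convex S\<close> \<open>0 \<in> S\<close> that])
    show "d' 0 - s * d 0 = 0" using \<open>f 0 = 1\<close> \<open>g 0 = 0\<close> by (simp add: d_def d'_def)
    fix x assume "x \<in> S"
    show "((\<lambda>x. d' x - s * d x) has_field_derivative - s * (d' x - s * d x)) (at x within S)"
      by (rule derivative_eq_intros dd dd' \<open>x \<in> S\<close> refl | simp add: algebra_simps power2_eq_square)+
  qed
  then have "d x = 0"
    using linear_ode_zero[OF \<open>convex S\<close> \<open>0 \<in> S\<close> \<open>x \<in> S\<close>, of d s] dd \<open>f 0 = 1\<close>
    by (simp add: d_def)
  then show ?thesis by (simp add: d_def)
qed

definition cosh_coeff :: "complex \<Rightarrow> nat \<Rightarrow> complex" where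
  "cosh_coeff w k = (\<Prod>j<k. (of_nat j ^ 2 + w) / ((2 * of_nat j + 2) * (2 * of_nat j + 1)))"

lemma of_nat_fact_double:
  "of_nat (fact (2 * k)) = (\<Prod>j<k. (2 * of_nat j + 2) * (2 * of_nat j + 1) :: 'a::comm_semiring_1)"
proof (induction k)
  case (Suc k)
  have "fact (2 * Suc k) = fact (2 * k) * ((2 * k + 2) * (2 * k + 1) :: nat)"
    by (simp add: fact_Suc algebra_simps)
  then show ?case
    unfolding \<open>fact (2 * Suc k) = _\<close> of_nat_mult prod.lessThan_Suc Suc.IH of_nat_add of_nat_numeral of_nat_1 by simp
qed simp

lemma fact_double_step_neq_zero: "(2 * of_nat n + 2) * (2 * of_nat n + 1) \<noteq> (0 :: 'a::field_char_0)"
proof -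
  have "(2 * of_nat n + 2) * (2 * of_nat n + 1) = (of_nat ((2 * n + 2) * (2 * n + 1)) :: 'a)"
    by (simp add: algebra_simps)
  then show ?thesis by (simp only: of_nat_eq_0_iff) simp
qed

lemma cosh_coeff_eq: "cosh_coeff w k = (\<Prod>j<k. of_nat j ^ 2 + w) / of_nat (fact (2 * k))"
  unfolding cosh_coeff_def of_nat_fact_double by (rule prod_dividef)

lemma cosh_coeff_Suc:
  "cosh_coeff w (Suc n) = cosh_coeff w n * (of_nat n ^ 2 + w) / ((2 * of_nat n + 2) * (2 * of_nat n + 1))"
  by (simp add: cosh_coeff_def)

lemma summable_cosh_coeff: "summable (\<lambda>n. cosh_coeff w n * 2 ^ n)"
proof -
  obtain N :: nat where N: "real N \<ge> 2 * norm w" by (meson real_arch_simple)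
  show ?thesis
  proof (rule summable_ratio_test[of "3/4" N])
    fix n assume "n \<ge> N"
    then have n: "real n \<ge> 2 * norm w" using N by linarith
    define d where "d = (2 * real n + 2) * (2 * real n + 1)"
    have d_pos: "d > 0" unfolding d_def by simp
    have "norm (of_nat n ^ 2 + w :: complex) \<le> real n ^ 2 + norm w"
      by (metis norm_of_nat norm_power norm_triangle_ineq)
    also have "\<dots> \<le> 3/8 * d"
      unfolding d_def using n
      by (simp add: algebra_simps power2_eq_square) (use mult_nonneg_nonneg[of "real n" "real n"] in linarith)
    finally have ratio: "2 * norm (of_nat n ^ 2 + w :: complex) / d \<le> 3/4"
      using d_pos by (simp add: pos_divide_le_eq)
    have "(2 * of_nat n + 2) * (2 * of_nat n + 1) = (of_real d :: complex)"
      unfolding d_def by simp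
    then have "norm ((2 * of_nat n + 2) * (2 * of_nat n + 1) :: complex) = d"
      using d_pos by simp
    then have "norm (cosh_coeff w (Suc n) * 2 ^ Suc n) = 2 * norm (of_nat n ^ 2 + w :: complex) / d * norm (cosh_coeff w n * 2 ^ n)"
      by (simp add: cosh_coeff_Suc norm_mult norm_divide norm_power)
    also have "\<dots> \<le> 3/4 * norm (cosh_coeff w n * 2 ^ n)"
      by (rule mult_right_mono[OF ratio norm_ge_zero])
    finally show "norm (cosh_coeff w (Suc n) * 2 ^ Suc n) \<le> 3/4 * norm (cosh_coeff w n * 2 ^ n)" .
  qed simp
qed

definition cosh_fps :: "complex \<Rightarrow> complex fps" where
  "cosh_fps w = Abs_fps (cosh_coeff w)"

lemma fps_conv_radius_cosh_fps: "2 \<le> fps_conv_radius (cosh_fps w)"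
proof -
  have "norm (2 :: complex) \<le> conv_radius (cosh_coeff w)"
    by (rule conv_radius_geI) (use summable_cosh_coeff in simp)
  then show ?thesis by (simp add: cosh_fps_def fps_conv_radius_def)
qed

lemma norm_less_fps_conv_radius_cosh_fps:
  assumes "norm y < 2"
  shows "norm y < fps_conv_radius (cosh_fps w)"
    and "norm y < fps_conv_radius (fps_deriv (cosh_fps w))"
    and "norm y < fps_conv_radius (fps_deriv (fps_deriv (cosh_fps w)))"
proof -
  have "ereal (norm y) < 2" using assms by simp
  then show "norm y < fps_conv_radius (cosh_fps w)"
    using fps_conv_radius_cosh_fps by (rule less_le_trans)
  then show "norm y < fps_conv_radius (fps_deriv (cosh_fps w))"
    using fps_conv_radius_deriv by (rule less_le_trans)
  then show "norm y < fps_conv_radius (fps_deriv (fps_deriv (cosh_fps w)))"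
    using fps_conv_radius_deriv by (rule less_le_trans)
qed

lemma cosh_fps_ode:
  "fps_X * (fps_const 4 - fps_X) * fps_deriv (fps_deriv (cosh_fps w))
     + (fps_const 2 - fps_X) * fps_deriv (cosh_fps w) = fps_const w * cosh_fps w"
proof (rule fps_ext)
  fix n
  have rec: "cosh_coeff w (Suc n) * ((2 * of_nat n + 2) * (2 * of_nat n + 1)) = (of_nat n ^ 2 + w) * cosh_coeff w n"
    using fact_double_step_neq_zero[of n, where 'a = complex] by (simp add: cosh_coeff_Suc)
  show "fps_nth (fps_X * (fps_const 4 - fps_X) * fps_deriv (fps_deriv (cosh_fps w))
     + (fps_const 2 - fps_X) * fps_deriv (cosh_fps w)) n = fps_nth (fps_const w * cosh_fps w) n"
    using rec by (cases n) (auto simp: cosh_fps_def algebra_simps power2_eq_square)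
qed

lemma eval_cosh_fps_ode:
  fixes y :: complex
  assumes "norm y < 2"
  shows "y * (4 - y) * eval_fps (fps_deriv (fps_deriv (cosh_fps w))) y
     + (2 - y) * eval_fps (fps_deriv (cosh_fps w)) y = w * eval_fps (cosh_fps w) y"
proof -
  note radius = norm_less_fps_conv_radius_cosh_fps[OF assms, of w]
  have "eval_fps (fps_X * (fps_const 4 - fps_X) * fps_deriv (fps_deriv (cosh_fps w))
     + (fps_const 2 - fps_X) * fps_deriv (cosh_fps w)) y = eval_fps (fps_const w * cosh_fps w) y"
    by (simp only: cosh_fps_ode)
  then show ?thesis
    using radius by (simp add: eval_fps_mult eval_fps_add eval_fps_diff norm_less_fps_conv_radius_mult
        norm_less_fps_conv_radius_add norm_less_fps_conv_radius_diff)
qed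

lemma has_field_derivative_cosh_fps_cos:
  fixes p :: complex
  assumes "norm (2 - 2 * cos p) < 2"
  shows "((\<lambda>p. eval_fps (cosh_fps w) (2 - 2 * cos p))
           has_field_derivative eval_fps (fps_deriv (cosh_fps w)) (2 - 2 * cos p) * (2 * sin p)) (at p)"
    and "((\<lambda>p. eval_fps (fps_deriv (cosh_fps w)) (2 - 2 * cos p) * (2 * sin p))
           has_field_derivative w * eval_fps (cosh_fps w) (2 - 2 * cos p)) (at p)"
proof -
  note radius = norm_less_fps_conv_radius_cosh_fps[OF assms, of w]
  have dy: "((\<lambda>p. 2 - 2 * cos p) has_field_derivative 2 * sin p) (at p)"
    by (auto intro!: derivative_eq_intros)
  show "((\<lambda>p. eval_fps (cosh_fps w) (2 - 2 * cos p))
           has_field_derivative eval_fps (fps_deriv (cosh_fps w)) (2 - 2 * cos p) * (2 * sin p)) (at p)"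
    by (rule DERIV_chain2[OF has_field_derivative_eval_fps[OF radius(1)] dy])
  have d1: "((\<lambda>p. eval_fps (fps_deriv (cosh_fps w)) (2 - 2 * cos p)) has_field_derivative
      eval_fps (fps_deriv (fps_deriv (cosh_fps w))) (2 - 2 * cos p) * (2 * sin p)) (at p)"
    by (rule DERIV_chain2[OF has_field_derivative_eval_fps[OF radius(2)] dy])
  have "(2 * sin p) * (2 * sin p) = (2 - 2 * cos p) * (4 - (2 - 2 * cos p))"
    using sin_cos_squared_add3[of p] by algebra
  with eval_cosh_fps_ode[OF assms, of w]
  have "eval_fps (fps_deriv (fps_deriv (cosh_fps w))) (2 - 2 * cos p) * (2 * sin p) * (2 * sin p)
      + eval_fps (fps_deriv (cosh_fps w)) (2 - 2 * cos p) * (2 * cos p) = w * eval_fps (cosh_fps w) (2 - 2 * cos p)"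
    by algebra
  then show "((\<lambda>p. eval_fps (fps_deriv (cosh_fps w)) (2 - 2 * cos p) * (2 * sin p))
           has_field_derivative w * eval_fps (cosh_fps w) (2 - 2 * cos p)) (at p)"
    using DERIV_mult[OF d1 DERIV_cmult[OF DERIV_sin, of 2]] by (simp add: algebra_simps)
qed

lemma norm_two_minus_two_cos_segment:
  assumes "p \<in> closed_segment 0 (complex_of_real (pi / 3))"
  shows "norm (2 - 2 * cos p) \<le> 1"
proof -
  obtain u :: real where u: "0 \<le> u" "u \<le> 1" "p = of_real (u * (pi / 3))"
    using assms by (auto simp: in_segment scaleR_conv_of_real)
  have "cos (pi / 3) \<le> cos (u * (pi / 3))" "cos (u * (pi / 3)) \<le> 1"
    using u by (simp_all add: cos_mono_le_eq mult_left_le_one_le)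
  then have "\<bar>2 - 2 * cos (u * (pi / 3))\<bar> \<le> 1" by (simp add: cos_60)
  moreover have "2 - 2 * cos p = complex_of_real (2 - 2 * cos (u * (pi / 3)))"
    unfolding u(3) by (simp only: of_real_diff of_real_mult of_real_numeral cos_of_real[symmetric])
  ultimately show ?thesis by (simp only: norm_of_real)
qed

lemma eval_cosh_fps_two_minus_two_cos:
  assumes "p \<in> closed_segment 0 (complex_of_real (pi / 3))"
  shows "eval_fps (cosh_fps (s\<^sup>2)) (2 - 2 * cos p) = cosh (s * p)"
proof (rule second_order_ode_cosh[OF convex_closed_segment _ assms])
  show "eval_fps (cosh_fps (s\<^sup>2)) (2 - 2 * cos 0) = 1"
    by (simp add: eval_fps_at_0 cosh_fps_def cosh_coeff_def)
  show "eval_fps (fps_deriv (cosh_fps (s\<^sup>2))) (2 - 2 * cos 0) * (2 * sin 0) = 0" by simp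
  fix q assume "q \<in> closed_segment 0 (complex_of_real (pi / 3))"
  then have "norm (2 - 2 * cos q) < 2"
    using norm_two_minus_two_cos_segment by fastforce
  note derivs = has_field_derivative_cosh_fps_cos[OF this, of "s\<^sup>2"]
  show "((\<lambda>p. eval_fps (cosh_fps (s\<^sup>2)) (2 - 2 * cos p)) has_field_derivative
      eval_fps (fps_deriv (cosh_fps (s\<^sup>2))) (2 - 2 * cos q) * (2 * sin q))
      (at q within closed_segment 0 (complex_of_real (pi / 3)))"
    using derivs(1) by (rule has_field_derivative_at_within)
  show "((\<lambda>p. eval_fps (fps_deriv (cosh_fps (s\<^sup>2))) (2 - 2 * cos p) * (2 * sin p))
      has_field_derivative s\<^sup>2 * eval_fps (cosh_fps (s\<^sup>2)) (2 - 2 * cos q))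
      (at q within closed_segment 0 (complex_of_real (pi / 3)))"
    using derivs(2) by (rule has_field_derivative_at_within)
qed simp

lemma cosh_coeff_sums: "cosh_coeff (9 * z\<^sup>2) sums cosh (of_real pi * z)"
proof -
  have "2 - 2 * cos (complex_of_real (pi / 3)) = 1"
    unfolding cos_of_real cos_60 by simp
  with eval_cosh_fps_two_minus_two_cos[of "complex_of_real (pi / 3)" "3 * z"]
  have "eval_fps (cosh_fps ((3 * z)\<^sup>2)) 1 = cosh (3 * z * complex_of_real (pi / 3))"
    by simp
  then have "eval_fps (cosh_fps (9 * z\<^sup>2)) 1 = cosh (of_real pi * z)"
    by (simp add: power_mult_distrib mult.commute)
  moreover have "(\<lambda>n. fps_nth (cosh_fps (9 * z\<^sup>2)) n * 1 ^ n) sums eval_fps (cosh_fps (9 * z\<^sup>2)) 1"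
    by (rule sums_eval_fps, rule norm_less_fps_conv_radius_cosh_fps) simp
  ultimately show ?thesis by (simp add: cosh_fps_def)
qed

theorem mainTheorem18:
  fixes z :: complex
  shows "(\<lambda>n. (\<Prod>j<n. of_nat j ^ 2 + 9 * z ^ 2) / of_nat (fact (2 * n))) sums cosh (of_real pi * z)
       \<and> cf_converges_to
           (\<lambda>n. if n = 0 then 1 else if n = 1 then 2
                 else 5 * of_nat n ^ 2 - 4 * of_nat n + 1 + 9 * z ^ 2)
           (\<lambda>n. if n = 0 then 9 * z ^ 2
                 else - 2 * of_nat n * (2 * of_nat n - 1) * (of_nat n ^ 2 + 9 * z ^ 2))
           (cosh (of_real pi * z))"
proof -
  define p where "p j = of_nat j ^ 2 + 9 * z ^ 2" for j :: nat
  define q :: "nat \<Rightarrow> complex" where "q j = (2 * of_nat j + 2) * (2 * of_nat j + 1)" for j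
  interpret euler_cf
    "\<lambda>n. if n = 0 then 1 else if n = 1 then 2 else 5 * of_nat n ^ 2 - 4 * of_nat n + 1 + 9 * z ^ 2"
    "\<lambda>n. if n = 0 then 9 * z ^ 2 else - 2 * of_nat n * (2 * of_nat n - 1) * (of_nat n ^ 2 + 9 * z ^ 2)"
    p q
    by unfold_locales (simp_all add: p_def q_def algebra_simps power2_eq_square)
  have "q j \<noteq> 0" for j
    unfolding q_def by (rule fact_double_step_neq_zero)
  moreover have "(\<lambda>k. \<Prod>j<k. p j / q j) sums cosh (of_real pi * z)"
    using cosh_coeff_sums[of z] by (simp add: cosh_coeff_def[abs_def] p_def q_def)
  ultimately show ?thesis
    using cf_converges_to_iff_sums cosh_coeff_sums[of z] unfolding cosh_coeff_eq by simp
qed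

end
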